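(* Let $k_1<k_2$ be positive integers, $M\subseteq\mathbb{N}$ infinite and $\varphi:[M]^{k_1}\to[\mathbb{N}]^{k_2}$ any map. Then there exists an infinite $L\subseteq M$ such that for every plegma pair $(s_1,s_2)$ in $[L]^{k_1}$, neither $(\varphi(s_1),\varphi(s_2))$ nor $(\varphi(s_2),\varphi(s_1))$ is a plegma pair in $[\mathbb{N}]^{k_2}$. In particular there is no infinite $L\subseteq M$ such that $\varphi$ maps every plegma family in $[L]^{k_1}$ to a plegma family in $[\mathbb{N}]^{k_2}$.
   Context: $[M]^k$ is the set of $k$-element subsets of $M$, each $s$ identified with its increasing enumeration $s(1)<\dots<s(k)$. A finite sequence $(s_j)_{j=1}^l$ in $[M]^k$ is a plegma family if $s_1(i)<\dots<s_l(i)$ for every $1\le i\le k$ and $s_l(i)<s_1(i+1)$ for every $1\le i<k$; a plegma pair is a plegma family of length 2. *)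

theory Defs
  imports Main
begin

definition ksubsets :: "nat set \<Rightarrow> nat \<Rightarrow> nat set set" where
  "ksubsets M k = {s. s \<subseteq> M \<and> finite s \<and> card s = k}"

text \<open>Increasing enumeration, 1-indexed: elt s i = s(i) for 1 <= i <= card s.\<close>
definition elt :: "nat set \<Rightarrow> nat \<Rightarrow> nat" where
  "elt s i = sorted_list_of_set s ! (i - 1)"

definition plegma_family :: "nat set \<Rightarrow> nat \<Rightarrow> nat set list \<Rightarrow> bool" where
  "plegma_family M k ss \<longleftrightarrow>
     ss \<noteq> [] \<and> (\<forall>s \<in> set ss. s \<in> ksubsets M k) \<and>
     (\<forall>i \<in> {1..k}. \<forall>j. Suc j < length ss \<longrightarrow> elt (ss ! j) i < elt (ss ! Suc j) i) \<and>
     (\<forall>i. 1 \<le> i \<and> i < k \<longrightarrow> elt (last ss) i < elt (hd ss) (Suc i))"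

definition plegma_pair :: "nat set \<Rightarrow> nat \<Rightarrow> nat set \<Rightarrow> nat set \<Rightarrow> bool" where
  "plegma_pair M k s1 s2 \<longleftrightarrow> plegma_family M k [s1, s2]"

end

theory Submission
  imports Defs "HOL-Library.Ramsey" "HOL-Library.Infinite_Set"
begin

(* Merging a plegma pair (s1, s2) of k-sets gives a 2k-set whose odd-indexed
   elements are s1 and whose even-indexed elements are s2, so a property of plegma pairs
   is a colouring of 2k-sets and Ramsey's theorem yields an infinite Y on which either all
   plegma pairs have the property or none does.  It therefore suffices to show that on no
   infinite Y can phi send all plegma pairs forward (to a plegma pair) or all backward.
   Both follow from a "ladder" of k-sets inside Y: rows B_0, B_1, ... where consecutive
   rows are plegma pairs, and for each row E a chain of k plegma steps from a fixed set
   B_(E,0) = B_(0,0) up to B_(E,k).  Backward: the first elements of phi(B_(E,k)) would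
   decrease forever.  Forward: the first element of phi(B_(E,k)) is at least E, but
   k plegma steps only shift positions by k, so it is below the (k+1)-st element of
   phi(B_(0,0)); this needs k + 1 <= K. *)

lemma strict_mono_on_intervalI:
  fixes f :: "nat \<Rightarrow> 'a::order"
  assumes step: "\<And>i. a \<le> i \<Longrightarrow> i < b \<Longrightarrow> f i < f (Suc i)"
  shows "strict_mono_on {a..b} f"
proof (rule strict_mono_onI)
  fix i j assume i: "i \<in> {a..b}" and j: "j \<in> {a..b}" and "i < j"
  then have "Suc i \<le> j" by simp
  then show "f i < f j" using j
  proof (induction j rule: dec_induct)
    case base then show ?case using i step by simp
  next
    case (step j)
    then have "j \<in> {a..b}" using i by auto
    then have "f i < f j" using step.IH by simp
    also have "f j < f (Suc j)" using step.hyps step.prems i assms by simp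
    finally show ?case .
  qed
qed

lemma sorted_list_of_set_image:
  fixes f :: "nat \<Rightarrow> nat"
  assumes "strict_mono_on {1..n} f"
  shows "sorted_list_of_set (f ` {1..n}) = map f [1..<Suc n]"
proof -
  have "sorted_wrt (<) (map f [1..<Suc n])"
    unfolding sorted_wrt_map
    by (rule sorted_wrt_mono_rel[OF _ sorted_wrt_upt])
       (use assms in \<open>auto intro: strict_mono_onD\<close>)
  moreover have "set (map f [1..<Suc n]) = f ` {1..n}"
    by (auto simp: atLeastLessThanSuc_atLeastAtMost)
  ultimately show ?thesis
    by (metis sorted_list_of_set.idem_if_sorted_distinct strict_sorted_iff)
qed

lemma card_image_interval:
  fixes f :: "nat \<Rightarrow> nat"
  assumes "strict_mono_on {1..n} f"
  shows "card (f ` {1..n}) = n"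
proof -
  have "inj_on f {1..n}" using assms by (rule strict_mono_on_imp_inj_on)
  then show ?thesis by (simp add: card_image)
qed

lemma elt_image:
  fixes f :: "nat \<Rightarrow> nat"
  assumes "strict_mono_on {1..n} f" "1 \<le> i" "i \<le> n"
  shows "elt (f ` {1..n}) i = f i"
  using assms by (simp add: elt_def sorted_list_of_set_image del: upt_Suc One_nat_def)

lemma elt_image_card:
  assumes "finite s"
  shows "elt s ` {1..card s} = s"
proof -
  let ?l = "sorted_list_of_set s"
  have len: "length ?l = card s" by simp
  have "{1..card s} = Suc ` {..<length ?l}"
    using len by (simp add: image_Suc_lessThan)
  then have "elt s ` {1..card s} = (\<lambda>j. ?l ! j) ` {..<length ?l}"
    by (simp add: elt_def image_image)
  also have "\<dots> = set ?l" by (auto simp: set_conv_nth)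
  also have "\<dots> = s" using assms by simp
  finally show ?thesis .
qed

lemma plegma_pair_iff:
  "plegma_pair L k u v \<longleftrightarrow>
     u \<in> ksubsets L k \<and> v \<in> ksubsets L k \<and>
     (\<forall>i. 1 \<le> i \<and> i \<le> k \<longrightarrow> elt u i < elt v i) \<and>
     (\<forall>i. 1 \<le> i \<and> i < k \<longrightarrow> elt v i < elt u (Suc i))"
proof -
  have "(\<forall>j. Suc j < length [u, v] \<longrightarrow> P j) \<longleftrightarrow> P 0" for P :: "nat \<Rightarrow> bool"
    by auto
  then show ?thesis
    unfolding plegma_pair_def plegma_family_def by auto
qed

lemma plegma_pair_image:
  fixes f g :: "nat \<Rightarrow> nat"
  assumes "f ` {1..k} \<subseteq> L" "g ` {1..k} \<subseteq> L"
    and below: "\<And>i. 1 \<le> i \<Longrightarrow> i \<le> k \<Longrightarrow> f i < g i"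
    and above: "\<And>i. 1 \<le> i \<Longrightarrow> i < k \<Longrightarrow> g i < f (Suc i)"
  shows "plegma_pair L k (f ` {1..k}) (g ` {1..k})"
proof -
  have f: "strict_mono_on {1..k} f"
    by (rule strict_mono_on_intervalI) (use below above in fastforce)
  have g: "strict_mono_on {1..k} g"
  proof (rule strict_mono_on_intervalI)
    fix i assume "1 \<le> i" "i < k"
    then have "g i < f (Suc i)" "f (Suc i) < g (Suc i)" using below above by simp_all
    then show "g i < g (Suc i)" by simp
  qed
  show ?thesis
    using assms card_image_interval[OF f] card_image_interval[OF g] elt_image[OF f] elt_image[OF g]
    by (auto simp: plegma_pair_iff ksubsets_def simp del: One_nat_def)
qed

lemma plegma_pair_mono:
  "A \<subseteq> B \<Longrightarrow> plegma_pair A k s t \<Longrightarrow> plegma_pair B k s t"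
  by (auto simp: plegma_pair_iff ksubsets_def)

lemma plegma_chain_first_increasing:
  assumes chain: "\<And>n. plegma_pair L K (u n) (u (Suc n))" and "0 < K"
  shows "n \<le> elt (u n) 1"
proof -
  have "strict_mono (\<lambda>n. elt (u n) 1)"
    unfolding strict_mono_Suc_iff using chain \<open>0 < K\<close> by (simp add: plegma_pair_iff)
  then show ?thesis by (rule strict_mono_imp_increasing)
qed

lemma plegma_chain_not_descending:
  assumes chain: "\<And>n. plegma_pair L K (u (Suc n)) (u n)" and "0 < K"
  shows False
proof -
  have "n + elt (u n) 1 \<le> elt (u 0) 1" for n
  proof (induction n)
    case (Suc n)
    have "elt (u (Suc n)) 1 < elt (u n) 1"
      using chain[of n] \<open>0 < K\<close> by (simp add: plegma_pair_iff)
    then show ?case using Suc.IH by simp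
  qed simp
  from this[of "Suc (elt (u 0) 1)"] show False by simp
qed

text \<open>Each plegma step moves the \<open>j\<close>-th element below the \<open>(j+1)\<close>-st one of the
  previous set, so after \<open>n\<close> steps the \<open>j\<close>-th element is below the \<open>(j+n)\<close>-th of the start.\<close>
lemma plegma_chain_shift:
  assumes chain: "\<And>m. m < n \<Longrightarrow> plegma_pair L K (u m) (u (Suc m))"
    and "1 \<le> j" "j + n \<le> K"
  shows "elt (u n) j \<le> elt (u 0) (j + n)"
  using assms(2,3) chain
proof (induction n arbitrary: j)
  case (Suc n)
  have "elt (u (Suc n)) j < elt (u n) (Suc j)"
    using Suc.prems(3)[of n] Suc.prems(1,2) by (simp add: plegma_pair_iff)
  also have "\<dots> \<le> elt (u 0) (Suc j + n)"
    using Suc.IH[of "Suc j"] Suc.prems by simp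
  finally show ?case by simp
qed simp

text \<open>The odd- and even-indexed halves of a \<open>2k\<close>-set; they invert merging a plegma pair.\<close>
definition odd_part :: "nat \<Rightarrow> nat set \<Rightarrow> nat set" where
  "odd_part k X = (\<lambda>i. elt X (2*i - 1)) ` {1..k}"

definition even_part :: "nat \<Rightarrow> nat set \<Rightarrow> nat set" where
  "even_part k X = (\<lambda>i. elt X (2*i)) ` {1..k}"

lemma interval_odd_even_split:
  "{1..2*k} = (\<lambda>i. 2*i - 1) ` {1..k} \<union> (\<lambda>i::nat. 2*i) ` {1..k}"
proof (intro equalityI subsetI)
  fix j assume j: "j \<in> {1..2*k}"
  show "j \<in> (\<lambda>i. 2*i - 1) ` {1..k} \<union> (\<lambda>i. 2*i) ` {1..k}"
  proof (cases "even j")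
    case True
    then have "j = 2 * (j div 2)" "j div 2 \<in> {1..k}" using j by auto
    then show ?thesis by (intro UnI2 image_eqI[of _ _ "j div 2"])
  next
    case False
    then obtain m where m: "j = 2*m + 1" by (rule oddE)
    then have "j = 2 * Suc m - 1" "Suc m \<in> {1..k}" using j by auto
    then show ?thesis by (intro UnI1 image_eqI[of _ _ "Suc m"])
  qed
qed auto

lemma plegma_pair_union:
  assumes "plegma_pair L k s1 s2"
  shows "card (s1 \<union> s2) = 2*k" "odd_part k (s1 \<union> s2) = s1" "even_part k (s1 \<union> s2) = s2"
proof -
  have s: "finite s1" "card s1 = k" "finite s2" "card s2 = k"
    using assms by (auto simp: plegma_pair_iff ksubsets_def)
  define a where "a = elt s1"
  define b where "b = elt s2"
  have a_img: "a ` {1..k} = s1" and b_img: "b ` {1..k} = s2"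
    using elt_image_card[of s1] elt_image_card[of s2] s unfolding a_def b_def by simp_all
  have ab: "\<And>i. 1 \<le> i \<Longrightarrow> i \<le> k \<Longrightarrow> a i < b i"
    and ba: "\<And>i. 1 \<le> i \<Longrightarrow> i < k \<Longrightarrow> b i < a (Suc i)"
    using assms unfolding a_def b_def plegma_pair_iff by auto
  define w where "w j = (if even j then b (j div 2) else a (Suc j div 2))" for j
  have w_odd: "w (2*i - 1) = a i" if i: "1 \<le> i" for i
  proof -
    obtain m where "i = Suc m" using i by (cases i) auto
    then show ?thesis by (simp add: w_def)
  qed
  have w_even: "w (2*i) = b i" for i by (simp add: w_def)
  have w_mono: "strict_mono_on {1..2*k} w"
  proof (rule strict_mono_on_intervalI)
    fix j assume j: "1 \<le> j" "j < 2*k"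
    show "w j < w (Suc j)"
    proof (cases "even j")
      case True
      then obtain i where i: "j = 2*i" by blast
      then have "Suc j = 2 * Suc i - 1" by simp
      then show ?thesis using ba[of i] j i w_odd[of "Suc i"] w_even[of i] by simp
    next
      case False
      then obtain m where m: "j = 2*m + 1" by (rule oddE)
      then have "j = 2 * Suc m - 1" "Suc j = 2 * Suc m" by simp_all
      then show ?thesis using ab[of "Suc m"] j w_odd[of "Suc m"] w_even[of "Suc m"] by simp
    qed
  qed
  have "w ` (\<lambda>i. 2*i - 1) ` {1..k} = s1"
    unfolding image_image a_img[symmetric] by (intro image_cong refl w_odd) simp
  moreover have "w ` (\<lambda>i. 2*i) ` {1..k} = s2"
    unfolding image_image b_img[symmetric] by (simp add: w_even)
  ultimately have w_img: "w ` {1..2*k} = s1 \<union> s2"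
    unfolding interval_odd_even_split image_Un by simp
  have elt_w: "elt (s1 \<union> s2) j = w j" if "1 \<le> j" "j \<le> 2*k" for j
    using elt_image[OF w_mono that] w_img by simp
  show "card (s1 \<union> s2) = 2*k"
    using card_image_interval[OF w_mono] w_img by simp
  have "odd_part k (s1 \<union> s2) = (\<lambda>i. w (2*i - 1)) ` {1..k}"
    unfolding odd_part_def by (intro image_cong) (auto simp: elt_w)
  also have "\<dots> = a ` {1..k}" by (intro image_cong refl w_odd) simp
  finally show "odd_part k (s1 \<union> s2) = s1" using a_img by simp
  have "even_part k (s1 \<union> s2) = (\<lambda>i. w (2*i)) ` {1..k}"
    unfolding even_part_def by (intro image_cong) (auto simp: elt_w)
  then show "even_part k (s1 \<union> s2) = s2"
    using w_even b_img by simp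
qed

lemma plegma_ramsey:
  fixes P :: "nat set \<Rightarrow> nat set \<Rightarrow> bool"
  assumes "infinite M"
  obtains Y where "Y \<subseteq> M" "infinite Y"
    "(\<forall>s1 s2. plegma_pair Y k s1 s2 \<longrightarrow> P s1 s2) \<or> (\<forall>s1 s2. plegma_pair Y k s1 s2 \<longrightarrow> \<not> P s1 s2)"
proof -
  define c where "c X = (if P (odd_part k X) (even_part k X) then 0 else 1::nat)" for X
  have "\<forall>X. X \<subseteq> M \<and> finite X \<and> card X = 2*k \<longrightarrow> c X < 2"
    by (simp add: c_def)
  from Ramsey[OF assms this] obtain Y t where Y: "Y \<subseteq> M" "infinite Y"
    and hom: "\<forall>X. X \<subseteq> Y \<and> finite X \<and> card X = 2*k \<longrightarrow> c X = t"
    by (elim exE conjE)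
  have P_iff: "P s1 s2 \<longleftrightarrow> t = 0" if pp: "plegma_pair Y k s1 s2" for s1 s2
  proof -
    have "c (s1 \<union> s2) = t"
      using pp hom plegma_pair_union(1)[OF pp] by (auto simp: plegma_pair_iff ksubsets_def)
    moreover have "c (s1 \<union> s2) = (if P s1 s2 then 0 else 1::nat)"
      unfolding c_def plegma_pair_union(2,3)[OF pp] ..
    ultimately show ?thesis by (auto split: if_splits)
  qed
  show ?thesis
  proof (cases "t = 0")
    case True
    then show ?thesis using that Y P_iff by blast
  next
    case False
    then show ?thesis using that Y P_iff by blast
  qed
qed

text \<open>With \<open>y\<close> the
  increasing enumeration of \<open>Y\<close>, \<open>B E m\<close> uses the indices \<open>g E (i + m) + (k - m)\<close>; any gaps \<open>\<ge> 2\<close> in \<open>g E\<close> give the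
  rungs, and the factor \<open>E + 1\<close> above position \<open>k\<close> makes consecutive rows interleave.\<close>
lemma plegma_ladder:
  assumes "infinite Y"
  obtains B :: "nat \<Rightarrow> nat \<Rightarrow> nat set" where
    "\<And>E m. m < k \<Longrightarrow> plegma_pair Y k (B E m) (B E (Suc m))"
    "\<And>E. plegma_pair Y k (B E k) (B (Suc E) k)"
    "\<And>E. B E 0 = B 0 0"
proof -
  define y where "y = enumerate Y"
  have y_mono: "strict_mono y" and y_in: "\<And>n. y n \<in> Y"
    using assms by (simp_all add: y_def strict_mono_enumerate enumerate_in_set)
  define g where "g E d = (if d \<le> k then 1 else Suc E) * 3^d" for E d :: nat
  have g_gap: "g E d + 2 \<le> g E (Suc d)" for E d
  proof -
    define c where "c d = (if d \<le> k then 1 else Suc E)" for d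
    have "c d \<le> c (Suc d)" "1 \<le> c (Suc d)" by (simp_all add: c_def)
    then have "c d * 3^d + 2 \<le> c (Suc d) * 3^d + 2 * (c (Suc d) * 3^d)"
      by (intro add_mono mult_right_mono) simp_all
    then show ?thesis by (simp add: g_def c_def[symmetric])
  qed
  have g_high: "g E (i + k) = Suc E * 3^(i + k)" if "1 \<le> i" for E i :: nat
    using that by (simp add: g_def)
  define B where "B E m = (\<lambda>i. y (g E (i + m) + (k - m))) ` {1..k}" for E m
  show thesis
  proof (rule that)
    fix E m assume "m < k"
    show "plegma_pair Y k (B E m) (B E (Suc m))"
      unfolding B_def
    proof (rule plegma_pair_image)
      fix i
      have "g E (i + m) + (k - m) < g E (Suc (i + m)) + (k - Suc m)"
        using g_gap[of E "i + m"] \<open>m < k\<close> by simp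
      then show "y (g E (i + m) + (k - m)) < y (g E (i + Suc m) + (k - Suc m))"
        using y_mono by (simp add: strict_mono_less)
      have "g E (i + Suc m) + (k - Suc m) < g E (Suc i + m) + (k - m)"
        using \<open>m < k\<close> by simp
      then show "y (g E (i + Suc m) + (k - Suc m)) < y (g E (Suc i + m) + (k - m))"
        using y_mono by (simp add: strict_mono_less)
    qed (auto simp: y_in)
  next
    fix E
    show "plegma_pair Y k (B E k) (B (Suc E) k)"
      unfolding B_def
    proof (rule plegma_pair_image)
      fix i :: nat assume "1 \<le> i"
      have "g E (i + k) < g (Suc E) (i + k)"
        using g_high[OF \<open>1 \<le> i\<close>, of E] g_high[OF \<open>1 \<le> i\<close>, of "Suc E"] by simp
      then show "y (g E (i + k) + (k - k)) < y (g (Suc E) (i + k) + (k - k))"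
        using y_mono by (simp add: strict_mono_less)
      have "Suc (Suc E) * 3^(i + k) < Suc E * (3::nat)^(Suc i + k)" by simp
      then have "g (Suc E) (i + k) < g E (Suc i + k)"
        using g_high[OF \<open>1 \<le> i\<close>, of "Suc E"] g_high[of "Suc i" E] by simp
      then show "y (g (Suc E) (i + k) + (k - k)) < y (g E (Suc i + k) + (k - k))"
        using y_mono by (simp add: strict_mono_less)
    qed (auto simp: y_in)
  next
    fix E
    show "B E 0 = B 0 0"
      unfolding B_def by (intro image_cong) (simp_all add: g_def)
  qed
qed

lemma plegma_images_not_all_forward:
  fixes \<phi> :: "nat set \<Rightarrow> nat set"
  assumes "infinite Y" "k < K"
  shows "\<exists>s1 s2. plegma_pair Y k s1 s2 \<and> \<not> plegma_pair UNIV K (\<phi> s1) (\<phi> s2)"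
proof (rule ccontr)
  assume "\<not> ?thesis"
  then have fwd: "\<And>s1 s2. plegma_pair Y k s1 s2 \<Longrightarrow> plegma_pair UNIV K (\<phi> s1) (\<phi> s2)"
    by blast
  obtain B :: "nat \<Rightarrow> nat \<Rightarrow> nat set" where rung: "\<And>E m. m < k \<Longrightarrow> plegma_pair Y k (B E m) (B E (Suc m))"
    and row: "\<And>E. plegma_pair Y k (B E k) (B (Suc E) k)"
    and base: "\<And>E. B E 0 = B 0 0"
    using plegma_ladder[OF assms(1)] by blast
  have rows: "\<And>E. plegma_pair UNIV K (\<phi> (B E k)) (\<phi> (B (Suc E) k))"
    by (rule fwd[OF row])
  have rungs: "\<And>m. m < k \<Longrightarrow> plegma_pair UNIV K (\<phi> (B E m)) (\<phi> (B E (Suc m)))" for E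
    by (rule fwd[OF rung])
  define N where "N = elt (\<phi> (B 0 0)) (1 + k)"
  have "Suc N \<le> elt (\<phi> (B (Suc N) k)) 1"
    using plegma_chain_first_increasing[where u = "\<lambda>E. \<phi> (B E k)", OF rows] assms(2)
    by simp
  also have "\<dots> \<le> elt (\<phi> (B (Suc N) 0)) (1 + k)"
    using plegma_chain_shift[where u = "\<lambda>m. \<phi> (B (Suc N) m)" and n = k and j = 1, OF rungs] assms(2)
    by simp
  also have "\<dots> = elt (\<phi> (B 0 0)) (1 + k)"
    by (simp only: base[of "Suc N"])
  also have "\<dots> = N"
    by (simp only: N_def)
  finally show False by simp
qed

lemma plegma_images_not_all_backward:
  fixes \<phi> :: "nat set \<Rightarrow> nat set"
  assumes "infinite Y" "0 < K"
  shows "\<exists>s1 s2. plegma_pair Y k s1 s2 \<and> \<not> plegma_pair UNIV K (\<phi> s2) (\<phi> s1)"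
proof (rule ccontr)
  assume "\<not> ?thesis"
  then have bwd: "\<And>s1 s2. plegma_pair Y k s1 s2 \<Longrightarrow> plegma_pair UNIV K (\<phi> s2) (\<phi> s1)"
    by blast
  obtain B :: "nat \<Rightarrow> nat \<Rightarrow> nat set" where row: "\<And>E. plegma_pair Y k (B E k) (B (Suc E) k)"
    using plegma_ladder[OF assms(1)] by metis
  have "\<And>E. plegma_pair UNIV K (\<phi> (B (Suc E) k)) (\<phi> (B E k))"
    by (rule bwd[OF row])
  then show False
    by (rule plegma_chain_not_descending[where u = "\<lambda>E. \<phi> (B E k)"]) (rule assms(2))
qed

lemma plegma_pairs_incomparable_on_subset:
  fixes \<phi> :: "nat set \<Rightarrow> nat set"
  assumes "infinite M" "k < K"
  shows "\<exists>L. L \<subseteq> M \<and> infinite L \<and>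
           (\<forall>s1 s2. plegma_pair L k s1 s2 \<longrightarrow>
              \<not> plegma_pair UNIV K (\<phi> s1) (\<phi> s2) \<and>
              \<not> plegma_pair UNIV K (\<phi> s2) (\<phi> s1))"
proof -
  let ?fwd = "\<lambda>s1 s2. plegma_pair UNIV K (\<phi> s1) (\<phi> s2)"
  obtain Y1 where Y1: "Y1 \<subseteq> M" "infinite Y1"
    and dich1: "(\<forall>s1 s2. plegma_pair Y1 k s1 s2 \<longrightarrow> ?fwd s1 s2) \<or>
                (\<forall>s1 s2. plegma_pair Y1 k s1 s2 \<longrightarrow> \<not> ?fwd s1 s2)"
    by (rule plegma_ramsey[OF assms(1)])
  have not_fwd: "\<forall>s1 s2. plegma_pair Y1 k s1 s2 \<longrightarrow> \<not> ?fwd s1 s2"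
    using dich1 plegma_images_not_all_forward[OF Y1(2) assms(2), of \<phi>] by blast
  obtain Y2 where Y2: "Y2 \<subseteq> Y1" "infinite Y2"
    and dich2: "(\<forall>s1 s2. plegma_pair Y2 k s1 s2 \<longrightarrow> ?fwd s2 s1) \<or>
                (\<forall>s1 s2. plegma_pair Y2 k s1 s2 \<longrightarrow> \<not> ?fwd s2 s1)"
    by (rule plegma_ramsey[OF Y1(2)])
  have not_bwd: "\<forall>s1 s2. plegma_pair Y2 k s1 s2 \<longrightarrow> \<not> ?fwd s2 s1"
    using dich2 plegma_images_not_all_backward[OF Y2(2), of K k \<phi>] assms(2) by auto
  have "\<forall>s1 s2. plegma_pair Y2 k s1 s2 \<longrightarrow> \<not> ?fwd s1 s2 \<and> \<not> ?fwd s2 s1"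
    using not_fwd not_bwd plegma_pair_mono[OF Y2(1)] by blast
  then show ?thesis
    using Y1(1) Y2 by (intro exI[of _ Y2]) auto
qed

text \<open>The second half follows directly, since plegma pairs are plegma families.\<close>
theorem mainTheorem3:
  fixes k1 k2 :: nat and M :: "nat set" and \<phi> :: "nat set \<Rightarrow> nat set"
  assumes "0 < k1" and "k1 < k2" and "infinite M"
    and "\<forall>s \<in> ksubsets M k1. \<phi> s \<in> ksubsets UNIV k2"
  shows "(\<exists>L. L \<subseteq> M \<and> infinite L \<and>
            (\<forall>s1 s2. plegma_pair L k1 s1 s2 \<longrightarrow>
               \<not> plegma_pair UNIV k2 (\<phi> s1) (\<phi> s2) \<and>
               \<not> plegma_pair UNIV k2 (\<phi> s2) (\<phi> s1)))
       \<and> \<not> (\<exists>L. L \<subseteq> M \<and> infinite L \<and>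
            (\<forall>ss. plegma_family L k1 ss \<longrightarrow> plegma_family UNIV k2 (map \<phi> ss)))"
proof
  show "\<exists>L. L \<subseteq> M \<and> infinite L \<and>
          (\<forall>s1 s2. plegma_pair L k1 s1 s2 \<longrightarrow>
             \<not> plegma_pair UNIV k2 (\<phi> s1) (\<phi> s2) \<and>
             \<not> plegma_pair UNIV k2 (\<phi> s2) (\<phi> s1))"
    using plegma_pairs_incomparable_on_subset[OF assms(3,2)] .
  show "\<not> (\<exists>L. L \<subseteq> M \<and> infinite L \<and>
          (\<forall>ss. plegma_family L k1 ss \<longrightarrow> plegma_family UNIV k2 (map \<phi> ss)))"
  proof
    assume "\<exists>L. L \<subseteq> M \<and> infinite L \<and>
              (\<forall>ss. plegma_family L k1 ss \<longrightarrow> plegma_family UNIV k2 (map \<phi> ss))"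
    then obtain L where "infinite L"
      and preserves: "\<And>ss. plegma_family L k1 ss \<Longrightarrow> plegma_family UNIV k2 (map \<phi> ss)"
      by blast
    have "plegma_pair UNIV k2 (\<phi> s1) (\<phi> s2)" if "plegma_pair L k1 s1 s2" for s1 s2
      using preserves[of "[s1, s2]"] that by (simp add: plegma_pair_def)
    with plegma_images_not_all_forward[OF \<open>infinite L\<close> assms(2)] show False
      by blast
  qed
qed

end
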